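(* Let $\varphi:\mathfrak{h}\to V^*$ be a complex factorization structure and $j\in\{1,\ldots,m\}$. Then for every $\ell\in\mathbb{P}(V_j)$ (not only generic ones) there exists $T\in\hat V_j^*$ such that $\varphi(\psi_j(\ell))$ is spanned by $\alpha\otimes T$, where $\alpha$ spans $\ell^0\subset V_j^*$ and is placed in the $j$-th slot.
   Context: $V_1,\ldots,V_m$ are 2-dimensional complex vector spaces, $V^*=V_1^*\otimes\cdots\otimes V_m^*$, $\hat V_j^*=\bigotimes_{r\neq j}V_r^*$, $\ell^0$ is the annihilator of $\ell$. $\Sigma^0_{j,\ell}=V_1^*\otimes\cdots\otimes\ell^0\otimes\cdots\otimes V_m^*$ ($\ell^0$ in slot $j$). A factorization structure of dimension $m$ is an injective linear map $\varphi:\mathfrak{h}\to V^*$, $\dim\mathfrak{h}=m+1$, with $\dim(\varphi(\mathfrak{h})\cap\Sigma^0_{j,\ell})=1$ for all $j$ and all $\ell$ in a nonempty Zariski-open subset of $\mathbb{P}(V_j)$. The $j$-th factorization curve $\psi_j:\mathbb{P}(V_j)\to\mathbb{P}(\mathfrak{h})$ is the unique regular extension to all of $\mathbb{P}(V_j)\cong\mathbb{P}^1$ of the generically defined regular map $\ell\mapsto\varphi^{-1}(\varphi(\mathfrak{h})\cap\Sigma^0_{j,\ell})$. *)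

theory Defs
  imports Complex_Main
begin

text \<open>Each V_j is identified with complex x complex (coordinates w.r.t. a
basis), V_j^* likewise (a covector alpha acts by alpha(v) = fst alpha * fst v + snd alpha * snd v).
A tensor in V^* = V_1^* ... V_m^* is a function on multi-indices (bool lists of length m,
False = first basis covector, True = second), vanishing off lists of length m.
The space h (dim m+1) is identified with C^(m+1) = vectors nat => complex supported on {0..m};
phi is given by the images B 0, ..., B m of the standard basis.\<close>

definition is_tensor :: "nat \<Rightarrow> (bool list \<Rightarrow> complex) \<Rightarrow> bool" where
  "is_tensor k T \<longleftrightarrow> (\<forall>xs. length xs \<noteq> k \<longrightarrow> T xs = 0)"

definition ann :: "complex \<times> complex \<Rightarrow> complex \<times> complex \<Rightarrow> bool" where
  "ann \<alpha> v \<longleftrightarrow> fst \<alpha> * fst v + snd \<alpha> * snd v = 0"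

text \<open>alpha placed in slot j (1-based) tensored with T in the tensor product of the other slots.\<close>
definition slot_tensor ::
  "nat \<Rightarrow> nat \<Rightarrow> complex \<times> complex \<Rightarrow> (bool list \<Rightarrow> complex) \<Rightarrow> bool list \<Rightarrow> complex" where
  "slot_tensor m j \<alpha> T xs =
     (if length xs = m
      then (if xs ! (j - 1) then snd \<alpha> else fst \<alpha>) * T (take (j - 1) xs @ drop j xs)
      else 0)"

definition Sigma0 :: "nat \<Rightarrow> nat \<Rightarrow> complex \<times> complex \<Rightarrow> (bool list \<Rightarrow> complex) set" where
  "Sigma0 m j v = {slot_tensor m j \<alpha> S | \<alpha> S. ann \<alpha> v \<and> is_tensor (m - 1) S}"

definition hvec :: "nat \<Rightarrow> (nat \<Rightarrow> complex) set" where
  "hvec m = {x. \<forall>i>m. x i = 0}"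

definition phi :: "nat \<Rightarrow> (nat \<Rightarrow> bool list \<Rightarrow> complex) \<Rightarrow> (nat \<Rightarrow> complex) \<Rightarrow> bool list \<Rightarrow> complex" where
  "phi m B x = (\<lambda>xs. \<Sum>i\<le>m. x i * B i xs)"

definition phi_img :: "nat \<Rightarrow> (nat \<Rightarrow> bool list \<Rightarrow> complex) \<Rightarrow> (bool list \<Rightarrow> complex) set" where
  "phi_img m B = {phi m B x | x. x \<in> hvec m}"

definition injective_phi :: "nat \<Rightarrow> (nat \<Rightarrow> bool list \<Rightarrow> complex) \<Rightarrow> bool" where
  "injective_phi m B \<longleftrightarrow> (\<forall>x\<in>hvec m. \<forall>y\<in>hvec m. phi m B x = phi m B y \<longrightarrow> x = y)"

definition one_dim :: "(bool list \<Rightarrow> complex) set \<Rightarrow> bool" where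
  "one_dim S \<longleftrightarrow> (\<exists>w. (\<exists>xs. w xs \<noteq> 0) \<and> S = {(\<lambda>xs. c * w xs) | c. True})"

definition proj_pt :: "complex \<times> complex \<Rightarrow> (complex \<times> complex) set" where
  "proj_pt v = {(c * fst v, c * snd v) | c. True}"

definition P1 :: "(complex \<times> complex) set set" where
  "P1 = {proj_pt v | v. v \<noteq> (0, 0)}"

definition zopen_P1 :: "(complex \<times> complex) set set \<Rightarrow> bool" where
  "zopen_P1 U \<longleftrightarrow> U \<subseteq> P1 \<and> (U = {} \<or> finite (P1 - U))"

definition hline :: "(nat \<Rightarrow> complex) \<Rightarrow> (nat \<Rightarrow> complex) set" where
  "hline x = {(\<lambda>i. c * x i) | c. True}"

definition hom_eval :: "nat \<Rightarrow> (nat \<Rightarrow> complex) \<Rightarrow> complex \<times> complex \<Rightarrow> complex" where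
  "hom_eval d c v = (\<Sum>k\<le>d. c k * fst v ^ k * snd v ^ (d - k))"

definition hpoly_vec :: "nat \<Rightarrow> nat \<Rightarrow> (nat \<Rightarrow> nat \<Rightarrow> complex) \<Rightarrow> complex \<times> complex \<Rightarrow> nat \<Rightarrow> complex" where
  "hpoly_vec m d c v = (\<lambda>i. if i \<le> m then hom_eval d (c i) v else 0)"

definition regular_P1 :: "nat \<Rightarrow> ((complex \<times> complex) set \<Rightarrow> (nat \<Rightarrow> complex) set) \<Rightarrow> bool" where
  "regular_P1 m psi \<longleftrightarrow>
    (\<forall>v. v \<noteq> (0, 0) \<longrightarrow>
      (\<exists>U d c. zopen_P1 U \<and> proj_pt v \<in> U \<and>
         (\<forall>w. w \<noteq> (0, 0) \<and> proj_pt w \<in> U \<longrightarrow>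
              (\<exists>i. hpoly_vec m d c w i \<noteq> 0) \<and> psi (proj_pt w) = hline (hpoly_vec m d c w))))"

definition factorization_structure :: "nat \<Rightarrow> (nat \<Rightarrow> bool list \<Rightarrow> complex) \<Rightarrow> bool" where
  "factorization_structure m B \<longleftrightarrow>
     (\<forall>i\<le>m. is_tensor m (B i)) \<and> injective_phi m B \<and>
     (\<forall>j\<in>{1..m}. \<exists>U. zopen_P1 U \<and> U \<noteq> {} \<and>
        (\<forall>v. v \<noteq> (0, 0) \<and> proj_pt v \<in> U \<longrightarrow> one_dim (phi_img m B \<inter> Sigma0 m j v)))"

definition factorization_curve ::
  "nat \<Rightarrow> (nat \<Rightarrow> bool list \<Rightarrow> complex) \<Rightarrow> nat \<Rightarrow> ((complex \<times> complex) set \<Rightarrow> (nat \<Rightarrow> complex) set) \<Rightarrow> bool" where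
  "factorization_curve m B j psi \<longleftrightarrow> regular_P1 m psi \<and>
     (\<exists>U. zopen_P1 U \<and> U \<noteq> {} \<and>
        (\<forall>v. v \<noteq> (0, 0) \<and> proj_pt v \<in> U \<longrightarrow>
            one_dim (phi_img m B \<inter> Sigma0 m j v) \<and>
            psi (proj_pt v) = {x \<in> hvec m. phi m B x \<in> Sigma0 m j v}))"

end

theory Submission
  imports Defs "HOL-Analysis.Analysis"
begin

text \<open>For all but finitely many lines \<open>\<ell>\<close>, \<open>\<phi>(\<psi>\<^sub>j(\<ell>)) \<in> \<Sigma>\<^sup>0\<^sub>j\<^sub>,\<^sub>\<ell>\<close>, i.e. the
contraction of \<open>\<phi>(\<psi>\<^sub>j(\<ell>))\<close> in slot \<open>j\<close> with a vector spanning \<open>\<ell>\<close> vanishes. Near any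
given point, \<open>\<psi>\<^sub>j\<close> is given by homogeneous polynomials, so along an affine line of
representatives through that point this contraction is a continuous function of the parameter;
vanishing off a finite set, it vanishes everywhere. Finally a tensor whose slot-\<open>j\<close>
contraction with \<open>v\<close> vanishes is \<open>\<alpha> \<otimes> T\<close> with \<open>\<alpha>\<close> spanning the annihilator of \<open>v\<close>.\<close>

lemma continuous_constant_off_finite:
  fixes g :: "'a::{real_normed_vector, perfect_space} \<Rightarrow> 'b::t1_space"
  assumes "continuous_on UNIV g" "finite F" "\<And>t. t \<notin> F \<Longrightarrow> g t = c"
  shows "g a = c"
proof -
  have "closed {t. g t = c}"
    using continuous_closed_preimage_constant[OF assms(1) closed_UNIV] by (simp add: vimage_def)
  moreover have "- F \<subseteq> {t. g t = c}" using assms(3) by auto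
  ultimately have "closure (- F) \<subseteq> {t. g t = c}" by (rule closure_minimal[rotated])
  moreover have "closure (- F) = UNIV"
    by (simp add: closure_complement empty_interior_finite[OF assms(2)])
  ultimately show ?thesis by auto
qed

definition slot_insert :: "nat \<Rightarrow> bool \<Rightarrow> bool list \<Rightarrow> bool list" where
  "slot_insert j b ys = take (j - 1) ys @ b # drop (j - 1) ys"

definition covector_at :: "complex \<times> complex \<Rightarrow> bool \<Rightarrow> complex" where
  "covector_at \<alpha> b = (if b then snd \<alpha> else fst \<alpha>)"

definition slot_contraction ::
  "nat \<Rightarrow> complex \<times> complex \<Rightarrow> (bool list \<Rightarrow> complex) \<Rightarrow> bool list \<Rightarrow> complex" where
  "slot_contraction j v t ys = fst v * t (slot_insert j False ys) + snd v * t (slot_insert j True ys)"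

lemma slot_insert_nth_remove:
  assumes "j \<in> {1..length xs}"
  shows "slot_insert j (xs ! (j - 1)) (take (j - 1) xs @ drop j xs) = xs"
  using assms id_take_nth_drop[of "j - 1" xs]
  by (auto simp: slot_insert_def min_def Suc_diff_1[symmetric])

lemma slot_tensor_slot_insert:
  assumes "j \<in> {1..m}" "length ys = m - 1"
  shows "slot_tensor m j \<alpha> T (slot_insert j b ys) = covector_at \<alpha> b * T ys"
  using assms by (auto simp: slot_tensor_def slot_insert_def covector_at_def nth_append min_def
      Suc_diff_1[symmetric])

lemma slot_contraction_slot_tensor:
  assumes "j \<in> {1..m}" "length ys = m - 1"
  shows "slot_contraction j v (slot_tensor m j \<alpha> T) ys = (fst \<alpha> * fst v + snd \<alpha> * snd v) * T ys"
  using assms by (simp add: slot_contraction_def slot_tensor_slot_insert covector_at_def algebra_simps)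

lemma slot_contraction_Sigma0:
  assumes "t \<in> Sigma0 m j v" "j \<in> {1..m}" "length ys = m - 1"
  shows "slot_contraction j v t ys = 0"
  using assms by (auto simp: Sigma0_def ann_def slot_contraction_slot_tensor)

lemma slot_tensor_if_slot_contraction_zero:
  assumes t: "is_tensor m t" and v: "v \<noteq> (0, 0)" and j: "j \<in> {1..m}"
    and contr: "\<And>ys. length ys = m - 1 \<Longrightarrow> slot_contraction j v t ys = 0"
  obtains T where "is_tensor (m - 1) T" "t = slot_tensor m j (- snd v, fst v) T"
proof
  define \<alpha> where "\<alpha> = (- snd v, fst v)"
  define b\<^sub>0 where "b\<^sub>0 = (fst v \<noteq> 0)"
  have b\<^sub>0: "covector_at \<alpha> b\<^sub>0 \<noteq> 0"
    using v by (cases v) (auto simp: \<alpha>_def b\<^sub>0_def covector_at_def)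
  define T where
    "T ys = (if length ys = m - 1 then t (slot_insert j b\<^sub>0 ys) / covector_at \<alpha> b\<^sub>0 else 0)" for ys
  show "is_tensor (m - 1) T" by (simp add: is_tensor_def T_def)
  have proportional: "covector_at \<alpha> b\<^sub>0 * t (slot_insert j b ys) = covector_at \<alpha> b * t (slot_insert j b\<^sub>0 ys)"
    if "length ys = m - 1" for b ys
    using contr[OF that]
    by (cases b; cases b\<^sub>0) (auto simp: \<alpha>_def covector_at_def slot_contraction_def algebra_simps
        add_eq_0_iff2)
  show "t = slot_tensor m j (- snd v, fst v) T"
    unfolding \<alpha>_def[symmetric]
  proof
    fix xs :: "bool list"
    show "t xs = slot_tensor m j \<alpha> T xs"
    proof (cases "length xs = m")
      case True
      define ys where "ys = take (j - 1) xs @ drop j xs"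
      have ys: "length ys = m - 1" "slot_insert j (xs ! (j - 1)) ys = xs"
        using True j slot_insert_nth_remove[of j xs] by (auto simp: ys_def)
      then show ?thesis
        using proportional[OF ys(1), of "xs ! (j - 1)"] b\<^sub>0 slot_tensor_slot_insert[OF j ys(1)]
        by (metis T_def nonzero_mult_div_cancel_left times_divide_eq_right)
    qed (use t in \<open>simp add: is_tensor_def slot_tensor_def\<close>)
  qed
qed

lemma proj_pt_pencil_inj:
  fixes v u :: "complex \<times> complex"
  assumes det: "fst v * snd u - snd v * fst u \<noteq> 0"
  shows "inj (\<lambda>s. proj_pt (fst v + s * fst u, snd v + s * snd u))"
proof
  fix s\<^sub>1 s\<^sub>2
  assume "proj_pt (fst v + s\<^sub>1 * fst u, snd v + s\<^sub>1 * snd u) = proj_pt (fst v + s\<^sub>2 * fst u, snd v + s\<^sub>2 * snd u)"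
  moreover have "(fst v + s\<^sub>1 * fst u, snd v + s\<^sub>1 * snd u) \<in> proj_pt (fst v + s\<^sub>1 * fst u, snd v + s\<^sub>1 * snd u)"
    unfolding proj_pt_def by (rule CollectI, rule exI[of _ 1]) simp
  ultimately obtain c where c1: "fst v + s\<^sub>1 * fst u = c * (fst v + s\<^sub>2 * fst u)"
     and c2: "snd v + s\<^sub>1 * snd u = c * (snd v + s\<^sub>2 * snd u)"
    unfolding proj_pt_def by auto
  have "(1 - c) * (fst v * snd u - snd v * fst u) = 0"
    using c1 c2 by algebra
  then have "c = 1" using det by simp
  then have "(s\<^sub>1 - s\<^sub>2) * fst u = 0" "(s\<^sub>1 - s\<^sub>2) * snd u = 0"
    using c1 c2 by (simp_all add: algebra_simps)
  then show "s\<^sub>1 = s\<^sub>2" using det by auto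
qed

lemma pencil_nonzero:
  fixes v u :: "complex \<times> complex"
  assumes "fst v * snd u - snd v * fst u \<noteq> 0"
  shows "(fst v + s * fst u, snd v + s * snd u) \<noteq> (0, 0)"
proof
  assume "(fst v + s * fst u, snd v + s * snd u) = (0, 0)"
  then have "fst v = - s * fst u" "snd v = - s * snd u" by (auto simp: add_eq_0_iff2)
  then show False using assms by (simp add: algebra_simps)
qed

lemma finite_pencil_outside_zopen:
  fixes v u :: "complex \<times> complex"
  assumes det: "fst v * snd u - snd v * fst u \<noteq> 0" and U: "finite (P1 - U)"
  shows "finite {s. proj_pt (fst v + s * fst u, snd v + s * snd u) \<notin> U}"
proof -
  have "{s. proj_pt (fst v + s * fst u, snd v + s * snd u) \<notin> U}
      \<subseteq> (\<lambda>s. proj_pt (fst v + s * fst u, snd v + s * snd u)) -` (P1 - U)"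
    using pencil_nonzero[OF det] by (auto simp: P1_def)
  moreover have "finite ((\<lambda>s. proj_pt (fst v + s * fst u, snd v + s * snd u)) -` (P1 - U))"
    using finite_vimageI[OF U proj_pt_pencil_inj[OF det]] .
  ultimately show ?thesis by (rule finite_subset)
qed

lemma phi_hpoly_vec: "phi m B (hpoly_vec m d c w) ys = (\<Sum>i\<le>m. hom_eval d (c i) w * B i ys)"
  unfolding phi_def hpoly_vec_def by (rule sum.cong) auto

lemma continuous_on_slot_contraction_phi_hpoly_vec:
  fixes p :: "'a::topological_space \<Rightarrow> complex \<times> complex"
  assumes "continuous_on S p"
  shows "continuous_on S (\<lambda>s. slot_contraction j (p s) (phi m B (hpoly_vec m d c (p s))) ys)"
  unfolding slot_contraction_def phi_hpoly_vec hom_eval_def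
  by (intro continuous_intros assms)

lemma is_tensor_phi: "(\<And>i. i \<le> m \<Longrightarrow> is_tensor m (B i)) \<Longrightarrow> is_tensor m (phi m B x)"
  unfolding is_tensor_def phi_def by simp

lemma phi_image_hline: "phi m B ` hline x = {(\<lambda>xs. c * phi m B x xs) | c. True}"
proof -
  have "phi m B (\<lambda>i. c * x i) = (\<lambda>xs. c * phi m B x xs)" for c
    unfolding phi_def by (simp add: sum_distrib_left mult.assoc)
  then show ?thesis unfolding hline_def by (auto simp: image_iff) metis
qed

lemma slot_contraction_phi_chart_zero:
  assumes curve: "factorization_curve m B j psi" and j: "j \<in> {1..m}" and v: "v \<noteq> (0, 0)"
    and U: "zopen_P1 U" "proj_pt v \<in> U"
    and chart: "\<And>w. w \<noteq> (0, 0) \<Longrightarrow> proj_pt w \<in> U \<Longrightarrow> psi (proj_pt w) = hline (hpoly_vec m d c w)"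
    and ys: "length ys = m - 1"
  shows "slot_contraction j v (phi m B (hpoly_vec m d c v)) ys = 0"
proof -
  obtain U' where U': "zopen_P1 U'" "U' \<noteq> {}"
    and generic: "\<And>w. w \<noteq> (0, 0) \<Longrightarrow> proj_pt w \<in> U' \<Longrightarrow>
                    psi (proj_pt w) = {x \<in> hvec m. phi m B x \<in> Sigma0 m j w}"
    using curve unfolding factorization_curve_def by blast
  have vanishing: "slot_contraction j w (phi m B (hpoly_vec m d c w)) ys = 0"
    if "w \<noteq> (0, 0)" "proj_pt w \<in> U" "proj_pt w \<in> U'" for w
  proof -
    have "hpoly_vec m d c w \<in> hline (hpoly_vec m d c w)"
      unfolding hline_def by (rule CollectI, rule exI[of _ 1]) simp
    then have "phi m B (hpoly_vec m d c w) \<in> Sigma0 m j w"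
      using chart[OF that(1,2)] generic[OF that(1,3)] by auto
    then show ?thesis using slot_contraction_Sigma0 j ys by blast
  qed
  define u :: "complex \<times> complex" where "u = (if fst v \<noteq> 0 then (0, 1) else (1, 0))"
  have det: "fst v * snd u - snd v * fst u \<noteq> 0"
    using v unfolding u_def by (cases v) auto
  define p where "p s = (fst v + s * fst u, snd v + s * snd u)" for s
  have "continuous_on UNIV p"
    unfolding p_def by (intro continuous_intros)
  moreover have "finite ({s. proj_pt (p s) \<notin> U} \<union> {s. proj_pt (p s) \<notin> U'})"
    using finite_pencil_outside_zopen[OF det] U U' unfolding p_def zopen_P1_def by auto
  ultimately have "slot_contraction j (p 0) (phi m B (hpoly_vec m d c (p 0))) ys = 0"
  proof (rule continuous_constant_off_finite[OF continuous_on_slot_contraction_phi_hpoly_vec])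
    fix s
    assume "s \<notin> {s. proj_pt (p s) \<notin> U} \<union> {s. proj_pt (p s) \<notin> U'}"
    then show "slot_contraction j (p s) (phi m B (hpoly_vec m d c (p s))) ys = 0"
      using vanishing pencil_nonzero[OF det] unfolding p_def by blast
  qed
  then show ?thesis by (simp add: p_def)
qed

theorem proposition2p6:
  fixes m j :: nat
    and B :: "nat \<Rightarrow> bool list \<Rightarrow> complex"
    and psi :: "(complex \<times> complex) set \<Rightarrow> (nat \<Rightarrow> complex) set"
  assumes "factorization_structure m B"
    and "j \<in> {1..m}"
    and "factorization_curve m B j psi"
  shows "\<forall>v. v \<noteq> (0, 0) \<longrightarrow>
           (\<exists>\<alpha> T. \<alpha> \<noteq> (0, 0) \<and> ann \<alpha> v \<and> is_tensor (m - 1) T \<and>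
              phi m B ` psi (proj_pt v) = {(\<lambda>xs. c * slot_tensor m j \<alpha> T xs) | c. True})"
proof (intro allI impI)
  fix v :: "complex \<times> complex"
  assume v: "v \<noteq> (0, 0)"
  have "regular_P1 m psi"
    using assms(3) by (simp add: factorization_curve_def)
  from this[unfolded regular_P1_def, rule_format, OF v]
  obtain U d c where U: "zopen_P1 U" "proj_pt v \<in> U"
    and chart: "\<And>w. w \<noteq> (0, 0) \<Longrightarrow> proj_pt w \<in> U \<Longrightarrow> psi (proj_pt w) = hline (hpoly_vec m d c w)"
    by blast
  have "is_tensor m (phi m B (hpoly_vec m d c v))"
    using assms(1) by (simp add: factorization_structure_def is_tensor_phi)
  then obtain T where T: "is_tensor (m - 1) T"
    and factor: "phi m B (hpoly_vec m d c v) = slot_tensor m j (- snd v, fst v) T"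
    using slot_tensor_if_slot_contraction_zero[OF _ v assms(2)]
      slot_contraction_phi_chart_zero[OF assms(3,2) v U chart] by blast
  have "phi m B ` psi (proj_pt v) = {(\<lambda>xs. c * slot_tensor m j (- snd v, fst v) T xs) | c. True}"
    using chart[OF v U(2)] factor by (simp add: phi_image_hline)
  moreover have "(- snd v, fst v) \<noteq> (0, 0)" "ann (- snd v, fst v) v"
    using v by (auto simp: ann_def prod_eq_iff)
  ultimately show "\<exists>\<alpha> T. \<alpha> \<noteq> (0, 0) \<and> ann \<alpha> v \<and> is_tensor (m - 1) T \<and>
              phi m B ` psi (proj_pt v) = {(\<lambda>xs. c * slot_tensor m j \<alpha> T xs) | c. True}"
    using T by blast
qed

end
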